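(* Let $n\ge 1$ and consider a radial distribution network whose matrices are $\mathbf{R}=\mathbf{M}^{-T}\mathbf{D}_r\mathbf{M}^{-1}$ and $\mathbf{X}=\mathbf{M}^{-T}\mathbf{D}_x\mathbf{M}^{-1}$, where $\mathbf{M}\in\mathbb{R}^{n\times n}$ is an invertible matrix determined by the network topology and $\mathbf{D}_r,\mathbf{D}_x$ are diagonal matrices with positive diagonal entries given by the resistances and reactances of the power lines (so $\mathbf{R},\mathbf{X}$ are positive definite). Suppose the ratio of resistance to reactance of every power line equals the same constant $\rho>0$. Let $v_0\in\mathbb{R}$ be fixed, $\mathbf{1}\in\mathbb{R}^n$ the all-ones vector, $\mathbf{v}^{ref}\in\mathbb{R}^n$ fixed, and consider the dynamics in which $\mathbf{v}_t=\mathbf{R}\mathbf{p}_t+\mathbf{X}\mathbf{q}_t+v_0\mathbf{1}$, $\tilde{\mathbf{v}}_t=\mathbf{v}_t-\mathbf{v}^{ref}$, and for each node $i$ and $t\ge1$, $$p_{i,t}=p_{i,t-1}-k_i^p\,\tilde v_{i,t-1},\qquad q_{i,t}=q_{i,t-1}-k_i^q\,\tilde v_{i,t-1},$$ so that $\tilde{\mathbf{v}}_t=(\mathbf{I}-\mathbf{R}\mathbf{K}^p-\mathbf{X}\mathbf{K}^q)\tilde{\mathbf{v}}_{t-1}$, where $\mathbf{K}^p=\mathrm{diag}(k_1^p,\dots,k_n^p)$ and $\mathbf{K}^q=\mathrm{diag}(k_1^q,\dots,k_n^q)$. If $$0\prec \rho\mathbf{K}^p+\mathbf{K}^q\prec 2\mathbf{X}^{-1}$$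 (in the positive definite ordering), then the equilibrium $\tilde{\mathbf{v}}=0$ of this dynamical system is locally exponentially stable.
   Context: This models the internal power distribution network of a data center under the Linear DistFlow approximation: $p_i,q_i$ are active and reactive power injections at node $i$, $v_i$ the node voltage, $v_0$ the root voltage at the point of connection to the transmission grid. The notation $\mathbf{A}\prec\mathbf{B}$ means $\mathbf{B}-\mathbf{A}$ is positive definite. *)

theory Defs
  imports "HOL-Analysis.Analysis"
begin

definition diag_mat :: "real ^ 'n \<Rightarrow> real ^ 'n ^ 'n" where
  "diag_mat d = (\<chi> i j. if i = j then d $ i else 0)"

definition pos_def :: "real ^ 'n ^ 'n \<Rightarrow> bool" where
  "pos_def A \<longleftrightarrow> transpose A = A \<and> (\<forall>x. x \<noteq> 0 \<longrightarrow> x \<bullet> (A *v x) > 0)"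

definition pd_less :: "real ^ 'n ^ 'n \<Rightarrow> real ^ 'n ^ 'n \<Rightarrow> bool" where
  "pd_less A B \<longleftrightarrow> pos_def (B - A)"

definition loc_exp_stable :: "(nat \<Rightarrow> real ^ 'n) set \<Rightarrow> bool" where
  "loc_exp_stable traj \<longleftrightarrow>
     (\<exists>\<delta>>0. \<exists>C>0. \<exists>r. 0 \<le> r \<and> r < 1 \<and>
        (\<forall>x\<in>traj. norm (x 0) < \<delta> \<longrightarrow> (\<forall>t. norm (x t) \<le> C * r ^ t * norm (x 0))))"

definition vdev_traj ::
  "real ^ 'n ^ 'n \<Rightarrow> real ^ 'n ^ 'n \<Rightarrow> real \<Rightarrow> real ^ 'n \<Rightarrow> real ^ 'n \<Rightarrow> real ^ 'n
     \<Rightarrow> (nat \<Rightarrow> real ^ 'n) set" where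
  "vdev_traj R X v0 vref kp kq =
     {vt. \<exists>p q. (\<forall>t. vt t = (R *v p t + X *v q t + v0 *\<^sub>R (\<chi> i. 1)) - vref) \<and>
               (\<forall>t i. p (Suc t) $ i = p t $ i - kp $ i * vt t $ i) \<and>
               (\<forall>t i. q (Suc t) $ i = q t $ i - kq $ i * vt t $ i)}"

end

theory Submission
  imports Defs
begin

text \<open>With equal ratios \<open>r/x = \<rho>\<close> on all lines we have \<open>R = \<rho> X\<close>, so the closed loop is
  \<open>\<tilde>v\<^sub>t\<^sub>+\<^sub>1 = (I - X K) \<tilde>v\<^sub>t\<close> with \<open>K = \<rho> K\<^sup>p + K\<^sup>q\<close>. The quadratic form \<open>V x = x\<^sup>T K x\<close>
  is a Lyapunov function: writing \<open>w = X K x\<close>, one step changes it by exactly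
  \<open>-w\<^sup>T (2 X\<^sup>-\<^sup>1 - K) w\<close>, which is negative definite in \<open>x\<close> because \<open>X K\<close> is injective.
  Comparing both forms with \<open>\<parallel>x\<parallel>\<^sup>2\<close> turns this into a geometric decrease of \<open>V\<close>,
  hence exponential decay of \<open>\<tilde>v\<close>.\<close>

lemma diag_mat_mult_vec: "diag_mat d *v v = (\<chi> i. d $ i * v $ i)"
  by (simp add: diag_mat_def matrix_vector_mult_def vec_eq_iff if_distrib[where f="\<lambda>x. x * _"]
      cong: if_cong)

lemma invertible_diag_mat:
  assumes "\<And>i. d $ i \<noteq> (0::real)"
  shows "invertible (diag_mat d)"
  unfolding invertible_left_inverse
proof
  show "diag_mat (\<chi> i. inverse (d $ i)) ** diag_mat d = mat 1"
    using assms
    by (simp add: matrix_eq matrix_vector_mul_assoc[symmetric] diag_mat_mult_vec vec_eq_iff)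
qed

lemma matrix_inv_left:
  fixes A :: "'a::semiring_1^'n^'n"
  assumes "invertible A"
  shows "matrix_inv A ** A = mat 1"
  using someI_ex[OF assms[unfolded invertible_def]] unfolding matrix_inv_def by auto

lemma invertible_matrix_inv:
  fixes A :: "'a::semiring_1^'n^'n"
  assumes "invertible A"
  shows "invertible (matrix_inv A)"
  using someI_ex[OF assms[unfolded invertible_def]] unfolding matrix_inv_def invertible_def
  by blast

lemma congruent_diag_mat_scale:
  assumes "\<And>i. a $ i = c * b $ i"
  shows "(transpose N ** diag_mat a ** N) *v y = c *\<^sub>R ((transpose N ** diag_mat b ** N) *v y)"
proof -
  have "diag_mat a *v z = c *\<^sub>R (diag_mat b *v z)" for z
    by (simp add: diag_mat_mult_vec vec_eq_iff assms)
  then show ?thesis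
    by (simp add: matrix_vector_mul_assoc[symmetric] matrix_vector_mult_scaleR)
qed

lemma vdev_traj_step:
  assumes "vt \<in> vdev_traj R X v0 vref kp kq"
  shows "vt (Suc t) = vt t - R *v (diag_mat kp *v vt t) - X *v (diag_mat kq *v vt t)"
proof -
  obtain p q where
      vt: "\<And>t. vt t = (R *v p t + X *v q t + v0 *\<^sub>R (\<chi> i. 1)) - vref" and
      p: "\<And>t i. p (Suc t) $ i = p t $ i - kp $ i * vt t $ i" and
      q: "\<And>t i. q (Suc t) $ i = q t $ i - kq $ i * vt t $ i"
    using assms unfolding vdev_traj_def by blast
  have "p t - p (Suc t) = diag_mat kp *v vt t" "q t - q (Suc t) = diag_mat kq *v vt t"
    using p q by (simp_all add: vec_eq_iff diag_mat_mult_vec)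
  moreover have "vt (Suc t) = vt t - R *v (p t - p (Suc t)) - X *v (q t - q (Suc t))"
    using vt[of t] vt[of "Suc t"] by (simp add: matrix_vector_mult_diff_distrib)
  ultimately show ?thesis by simp
qed

lemma quadratic_form_closed_loop:
  fixes K X :: "real^'n^'n" and x :: "real^'n"
  assumes "transpose K = K" and "invertible X"
  defines "w \<equiv> X *v (K *v x)"
  shows "(x - w) \<bullet> (K *v (x - w)) = x \<bullet> (K *v x) - w \<bullet> ((2 *\<^sub>R matrix_inv X - K) *v w)"
proof -
  have "matrix_inv X *v w = K *v x"
    by (simp add: w_def matrix_vector_mul_assoc matrix_mul_assoc matrix_inv_left[OF assms(2)])
  moreover have "x \<bullet> (K *v w) = (K *v x) \<bullet> w"
    by (metis assms(1) dot_lmul_matrix vector_transpose_matrix)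
  ultimately show ?thesis
    by (simp add: matrix_vector_mult_diff_distrib matrix_vector_mult_diff_rdistrib
        inner_diff_left inner_diff_right scaleR_matrix_vector_assoc[symmetric] inner_commute)
qed

lemma positive_homogeneous2_bounds:
  fixes f :: "'a::euclidean_space \<Rightarrow> real"
  assumes "continuous_on UNIV f"
    and homogeneous: "\<And>c x. f (c *\<^sub>R x) = c\<^sup>2 * f x"
    and positive: "\<And>x. x \<noteq> 0 \<Longrightarrow> f x > 0"
  shows "\<exists>a>0. \<exists>b>0. \<forall>x. a * (norm x)\<^sup>2 \<le> f x \<and> f x \<le> b * (norm x)\<^sup>2"
proof -
  let ?S = "sphere (0::'a) 1"
  obtain e :: 'a where "e \<in> Basis" by (meson SOME_Basis)
  then have "?S \<noteq> {}" by force
  moreover have "continuous_on ?S f" using assms(1) continuous_on_subset by blast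
  ultimately obtain u w where u: "u \<in> ?S" "\<forall>y\<in>?S. f u \<le> f y"
    and w: "\<forall>y\<in>?S. f y \<le> f w"
    using continuous_attains_inf continuous_attains_sup compact_sphere by metis
  have bounds: "f u * (norm x)\<^sup>2 \<le> f x \<and> f x \<le> f w * (norm x)\<^sup>2" for x
  proof (cases "x = 0")
    case True
    then show ?thesis using homogeneous[of 0 x] by simp
  next
    case False
    define y where "y = (1 / norm x) *\<^sub>R x"
    have "y \<in> ?S" using False by (simp add: y_def)
    then have "f u \<le> f y" "f y \<le> f w" using u w by auto
    moreover have "f x = f y * (norm x)\<^sup>2"
      using False homogeneous[of "norm x" y] by (simp add: y_def)
    ultimately show ?thesis by (simp add: mult_right_mono)
  qed
  have "u \<noteq> 0" using u by auto
  then have "f u > 0" by (rule positive)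
  moreover have "f w > 0" using u w \<open>f u > 0\<close> by force
  ultimately show ?thesis using bounds by blast
qed

lemma pos_def_quadratic_form_bounds:
  assumes "pos_def A"
  shows "\<exists>a>0. \<exists>b>0. \<forall>x. a * (norm x)\<^sup>2 \<le> x \<bullet> (A *v x) \<and> x \<bullet> (A *v x) \<le> b * (norm x)\<^sup>2"
  using assms unfolding pos_def_def
  by (intro positive_homogeneous2_bounds continuous_intros)
    (auto simp: matrix_vector_mult_scaleR power2_eq_square)

lemma closed_loop_lyapunov_decrease:
  fixes K X :: "real^'n^'n"
  assumes "pos_def K" and "pos_def (2 *\<^sub>R matrix_inv X - K)" and "invertible X"
  shows "\<exists>\<gamma>>0. \<forall>x. (x - X *v (K *v x)) \<bullet> (K *v (x - X *v (K *v x)))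
                     \<le> x \<bullet> (K *v x) - \<gamma> * (norm x)\<^sup>2"
proof -
  let ?G = "2 *\<^sub>R matrix_inv X - K"
  let ?w = "\<lambda>x. X *v (K *v x)"
  have "?w x \<noteq> 0" if "x \<noteq> 0" for x
  proof
    assume "?w x = 0"
    then have "K *v x = 0"
      using inj_matrix_vector_mult[OF assms(3)] by (metis injD matrix_vector_mult_0_right)
    then show False
      using assms(1) that unfolding pos_def_def by (metis inner_zero_right less_irrefl)
  qed
  moreover have "continuous_on UNIV (\<lambda>x. ?w x \<bullet> (?G *v ?w x))"
    unfolding matrix_vector_mul_assoc by (intro continuous_intros)
  ultimately have "\<exists>\<gamma>>0. \<exists>b>0. \<forall>x. \<gamma> * (norm x)\<^sup>2 \<le> ?w x \<bullet> (?G *v ?w x)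
                                \<and> ?w x \<bullet> (?G *v ?w x) \<le> b * (norm x)\<^sup>2"
    using assms(2) unfolding pos_def_def
    by (intro positive_homogeneous2_bounds) (auto simp: matrix_vector_mult_scaleR power2_eq_square)
  then obtain \<gamma> where "\<gamma> > 0" and \<gamma>: "\<And>x. \<gamma> * (norm x)\<^sup>2 \<le> ?w x \<bullet> (?G *v ?w x)"
    by blast
  have "transpose K = K" using assms(1) by (simp add: pos_def_def)
  show ?thesis
  proof (intro exI conjI allI)
    fix x
    show "(x - ?w x) \<bullet> (K *v (x - ?w x)) \<le> x \<bullet> (K *v x) - \<gamma> * (norm x)\<^sup>2"
      unfolding quadratic_form_closed_loop[OF \<open>transpose K = K\<close> assms(3)] using \<gamma>[of x] by linarith
  qed (rule \<open>\<gamma> > 0\<close>)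
qed

lemma loc_exp_stable_quadratic_lyapunov:
  fixes V :: "real^'n \<Rightarrow> real"
  assumes "a > 0" and "b > 0" and "\<gamma> > 0"
    and bounds: "\<And>x. a * (norm x)\<^sup>2 \<le> V x \<and> V x \<le> b * (norm x)\<^sup>2"
    and decrease: "\<And>x t. x \<in> traj \<Longrightarrow> V (x (Suc t)) \<le> V (x t) - \<gamma> * (norm (x t))\<^sup>2"
  shows "loc_exp_stable traj"
proof -
  define c where "c = max 0 (1 - \<gamma> / b)"
  have c: "0 \<le> c" "c < 1" using assms by (auto simp: c_def)
  have contract: "V (x (Suc t)) \<le> c * V (x t)" if "x \<in> traj" for x t
  proof -
    have "\<gamma> / b * V (x t) \<le> \<gamma> * (norm (x t))\<^sup>2"
      using bounds[of "x t"] assms by (simp add: field_simps)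
    moreover have "(1 - \<gamma> / b) * V (x t) \<le> c * V (x t)"
    proof (rule mult_right_mono)
      show "0 \<le> V (x t)"
        using bounds[of "x t"] \<open>a > 0\<close>
        by (meson order_trans mult_nonneg_nonneg less_imp_le zero_le_power2)
    qed (simp add: c_def)
    ultimately show ?thesis using decrease[OF that, of t] by (simp add: algebra_simps)
  qed
  have "norm (x t) \<le> sqrt (b / a) * sqrt c ^ t * norm (x 0)" if "x \<in> traj" for x t
  proof -
    have "V (x t) \<le> c ^ t * V (x 0)"
    proof (induction t)
      case (Suc t)
      then show ?case
        using order_trans[OF contract[OF that, of t] mult_left_mono[OF Suc c(1)]]
        by (simp add: mult.assoc)
    qed simp
    then have "a * (norm (x t))\<^sup>2 \<le> c ^ t * (b * (norm (x 0))\<^sup>2)"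
      using bounds c by (meson order_trans mult_left_mono zero_le_power less_imp_le)
    then have "(norm (x t))\<^sup>2 \<le> b / a * c ^ t * (norm (x 0))\<^sup>2"
      using \<open>a > 0\<close> by (simp add: field_simps)
    also have "\<dots> = (sqrt (b / a) * sqrt c ^ t * norm (x 0))\<^sup>2"
      using assms c by (simp add: power_mult_distrib flip: real_sqrt_power)
    finally show ?thesis
      by (rule power2_le_imp_le) (use assms c in auto)
  qed
  moreover have "sqrt (b / a) > 0" "0 \<le> sqrt c" "sqrt c < 1"
    using assms c by auto
  ultimately show ?thesis
    unfolding loc_exp_stable_def by (meson zero_less_one)
qed

theorem theorem4p2:
  fixes M :: "real ^ 'n ^ 'n" and dr dx kp kq vref :: "real ^ 'n"
    and \<rho> v0 :: real and R X :: "real ^ 'n ^ 'n"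
  assumes "invertible M"
    and "\<forall>i. dr $ i > 0" and "\<forall>i. dx $ i > 0"
    and "R = transpose (matrix_inv M) ** diag_mat dr ** matrix_inv M"
    and "X = transpose (matrix_inv M) ** diag_mat dx ** matrix_inv M"
    and "\<rho> > 0" and "\<forall>i. dr $ i / dx $ i = \<rho>"
    and "pd_less 0 (\<rho> *\<^sub>R diag_mat kp + diag_mat kq)"
    and "pd_less (\<rho> *\<^sub>R diag_mat kp + diag_mat kq) (2 *\<^sub>R matrix_inv X)"
  shows "loc_exp_stable (vdev_traj R X v0 vref kp kq)"
proof -
  define K where "K = \<rho> *\<^sub>R diag_mat kp + diag_mat kq"
  have "invertible X"
    unfolding assms(5) using assms(1,3)
    by (intro invertible_mult transpose_invertible invertible_matrix_inv invertible_diag_mat)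
      (auto simp: less_imp_neq[symmetric])
  have R_eq: "R *v y = \<rho> *\<^sub>R (X *v y)" for y
    unfolding assms(4,5) using assms(3,7)
    by (intro congruent_diag_mat_scale) (metis divide_eq_eq less_irrefl)
  have step: "vt (Suc t) = vt t - X *v (K *v vt t)"
    if "vt \<in> vdev_traj R X v0 vref kp kq" for vt t
    using vdev_traj_step[OF that, of t]
    by (simp add: K_def R_eq matrix_vector_mult_add_rdistrib matrix_vector_right_distrib
        matrix_vector_mult_scaleR scaleR_matrix_vector_assoc[symmetric] algebra_simps)
  have "pos_def K" and "pos_def (2 *\<^sub>R matrix_inv X - K)"
    using assms(8,9) by (simp_all add: K_def pd_less_def)
  then obtain a b where "a > 0" "b > 0" and V_bounds:
      "\<And>x. a * (norm x)\<^sup>2 \<le> x \<bullet> (K *v x) \<and> x \<bullet> (K *v x) \<le> b * (norm x)\<^sup>2"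
    using pos_def_quadratic_form_bounds by blast
  obtain \<gamma> where "\<gamma> > 0" and V_decrease:
      "\<And>x. (x - X *v (K *v x)) \<bullet> (K *v (x - X *v (K *v x))) \<le> x \<bullet> (K *v x) - \<gamma> * (norm x)\<^sup>2"
    using closed_loop_lyapunov_decrease \<open>pos_def K\<close> \<open>pos_def (2 *\<^sub>R matrix_inv X - K)\<close>
      \<open>invertible X\<close> by blast
  show ?thesis
    by (rule loc_exp_stable_quadratic_lyapunov[where V = "\<lambda>x. x \<bullet> (K *v x)",
          OF \<open>a > 0\<close> \<open>b > 0\<close> \<open>\<gamma> > 0\<close>])
      (simp_all add: V_bounds step V_decrease)
qed

end
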